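(* Let $z$ be a perfect element of $D^{2,2,2}$, let $i\neq j$ in $\{1,2,3\}$, and let $u\in D^{2,2,2}$. Suppose that for every indecomposable representation $\rho$, $$\varphi_i(\Phi^+\rho(z))+\varphi_j(\Phi^+\rho(z))=\rho(u).$$ Then $u$ is perfect.
   Context: $D^{2,2,2}$ is the modular lattice generated by $x_1,y_1,x_2,y_2,x_3,y_3$ subject only to $x_i\subseteq y_i$ ($i=1,2,3$), with a greatest element $I$ adjoined. Meet is written $ab$, join $a+b$. A representation $\rho$ of $D^{2,2,2}$ in a finite-dimensional vector space $X_0$ is a lattice morphism from $D^{2,2,2}$ to the subspace lattice of $X_0$, with $\rho(I)=X_0$. Write $X_i=\rho(x_i)\subseteq Y_i=\rho(y_i)$. $\rho$ is indecomposable if $X_0\neq0$ and there is no decomposition $X_0=X'\oplus X''$ with $X',X''\neq0$ and $\rho(a)=(\rho(a)\cap X')+(\rho(a)\cap X'')$ for all $a$. An element $a$ is perfect if $\rho(a)\in\{0,X_0\}$ for every indecomposable $\rho$. Put $R=Y_1\oplus Y_2\oplus Y_3$ and $X^1_0=\{(\eta_1,\eta_2,\eta_3)\in R:\sum\eta_i=0\}$. Let $G'_i\subseteq R$ be the triples with $i$-th coordinate in $X_i$, and $H'_i\subseteq R$ the triples with $i$-th coordinate $0$. $\Phi^+\rho$ is the representation in $X^1_0$ with $\Phi^+\rho(y_i)=G'_i\cap X^1_0$, $\Phi^+\rho(x_i)=H'_i\cap X^1_0$, $\Phi^+\rho(I)=X^1_0$. The elementary map $\varphi_i:X^1_0\to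 X_0$ is $(\eta_1,\eta_2,\eta_3)\mapsto\eta_i$; $\varphi_i(S)$ denotes the image of a subspace $S$. *)

theory Defs
  imports Main "HOL-Library.Function_Algebras"
begin

datatype idx = I1 | I2 | I3

text \<open>Lattice terms over the generators x_i, y_i and the adjoined top I.
  Every element of D^{2,2,2} is the value of such a term; a representation
  is determined by the images of the generators (freeness of D^{2,2,2} as a
  modular lattice with the relations x_i <= y_i), and its value on a term is
  computed below.\<close>
datatype lterm = GX idx | GY idx | TopI | Meet lterm lterm | Join lterm lterm

definition ssum :: "'v::ab_group_add set \<Rightarrow> 'v set \<Rightarrow> 'v set" where
  "ssum A B = {a + b | a b. a \<in> A \<and> b \<in> B}"

fun evalL :: "'v::ab_group_add set \<Rightarrow> (idx \<Rightarrow> 'v set) \<Rightarrow> (idx \<Rightarrow> 'v set) \<Rightarrow> lterm \<Rightarrow> 'v set" where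
  "evalL X0 Xs Ys (GX i) = Xs i"
| "evalL X0 Xs Ys (GY i) = Ys i"
| "evalL X0 Xs Ys TopI = X0"
| "evalL X0 Xs Ys (Meet a b) = evalL X0 Xs Ys a \<inter> evalL X0 Xs Ys b"
| "evalL X0 Xs Ys (Join a b) = ssum (evalL X0 Xs Ys a) (evalL X0 Xs Ys b)"

text \<open>Ambient vector space: K-valued sequences (nat => 'k), K a field.\<close>
definition subspaceK :: "(nat \<Rightarrow> 'k::field) set \<Rightarrow> bool" where
  "subspaceK S \<longleftrightarrow> 0 \<in> S \<and> (\<forall>v\<in>S. \<forall>w\<in>S. v + w \<in> S)
      \<and> (\<forall>c. \<forall>v\<in>S. (\<lambda>n. c * v n) \<in> S)"

definition findimK :: "(nat \<Rightarrow> 'k::field) set \<Rightarrow> bool" where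
  "findimK S \<longleftrightarrow> (\<exists>N. \<forall>v\<in>S. \<forall>n\<ge>N. v n = 0)"

definition is_rep :: "(nat \<Rightarrow> 'k::field) set \<Rightarrow> (idx \<Rightarrow> (nat \<Rightarrow> 'k) set) \<Rightarrow> (idx \<Rightarrow> (nat \<Rightarrow> 'k) set) \<Rightarrow> bool" where
  "is_rep X0 Xs Ys \<longleftrightarrow> subspaceK X0 \<and> findimK X0 \<and>
     (\<forall>i. subspaceK (Xs i) \<and> subspaceK (Ys i) \<and> Xs i \<subseteq> Ys i \<and> Ys i \<subseteq> X0)"

definition indecomposable :: "(nat \<Rightarrow> 'k::field) set \<Rightarrow> (idx \<Rightarrow> (nat \<Rightarrow> 'k) set) \<Rightarrow> (idx \<Rightarrow> (nat \<Rightarrow> 'k) set) \<Rightarrow> bool" where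
  "indecomposable X0 Xs Ys \<longleftrightarrow> is_rep X0 Xs Ys \<and> X0 \<noteq> {0} \<and>
     \<not> (\<exists>X' X''. subspaceK X' \<and> subspaceK X'' \<and> X' \<noteq> {0} \<and> X'' \<noteq> {0} \<and>
          X' \<inter> X'' = {0} \<and> ssum X' X'' = X0 \<and>
          (\<forall>a. evalL X0 Xs Ys a = ssum (evalL X0 Xs Ys a \<inter> X') (evalL X0 Xs Ys a \<inter> X'')))"

definition perfect :: "'k::field itself \<Rightarrow> lterm \<Rightarrow> bool" where
  "perfect _ a \<longleftrightarrow> (\<forall>(X0::(nat \<Rightarrow> 'k) set) Xs Ys. indecomposable X0 Xs Ys \<longrightarrow>
       evalL X0 Xs Ys a = {0} \<or> evalL X0 Xs Ys a = X0)"

text \<open>The functor Phi^+: space X_0^1 inside R = Y_1 (+) Y_2 (+) Y_3,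
  triples represented as functions idx => vector.\<close>
definition Rsp :: "(idx \<Rightarrow> 'v::ab_group_add set) \<Rightarrow> (idx \<Rightarrow> 'v) set" where
  "Rsp Ys = {\<eta>. \<forall>i. \<eta> i \<in> Ys i}"

definition PhiX0 :: "(idx \<Rightarrow> 'v::ab_group_add set) \<Rightarrow> (idx \<Rightarrow> 'v) set" where
  "PhiX0 Ys = {\<eta> \<in> Rsp Ys. \<eta> I1 + \<eta> I2 + \<eta> I3 = 0}"

definition Gp :: "(idx \<Rightarrow> 'v::ab_group_add set) \<Rightarrow> (idx \<Rightarrow> 'v set) \<Rightarrow> idx \<Rightarrow> (idx \<Rightarrow> 'v) set" where
  "Gp Xs Ys i = {\<eta> \<in> Rsp Ys. \<eta> i \<in> Xs i}"

definition Hp :: "(idx \<Rightarrow> 'v::ab_group_add set) \<Rightarrow> idx \<Rightarrow> (idx \<Rightarrow> 'v) set" where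
  "Hp Ys i = {\<eta> \<in> Rsp Ys. \<eta> i = 0}"

definition evalPhiPlus :: "(idx \<Rightarrow> 'v::ab_group_add set) \<Rightarrow> (idx \<Rightarrow> 'v set) \<Rightarrow> lterm \<Rightarrow> (idx \<Rightarrow> 'v) set" where
  "evalPhiPlus Xs Ys a = evalL (PhiX0 Ys) (\<lambda>i. Hp Ys i \<inter> PhiX0 Ys) (\<lambda>i. Gp Xs Ys i \<inter> PhiX0 Ys) a"

definition phiMap :: "idx \<Rightarrow> (idx \<Rightarrow> 'v) set \<Rightarrow> 'v set" where
  "phiMap i S = (\<lambda>\<eta>. \<eta> i) ` S"

end

theory Submission
  imports Defs "HOL.Vector_Spaces"
begin

(* If \<rho> is indecomposable and X_0^1 \<noteq> 0, then \<rho> is generated by the images P_k = \<phi>_k(X_0^1):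
   Y_k = P_k and X_0 = P_1 + P_2 + P_3.  Otherwise complements of the P_k in the Y_k (compatible
   with the X_k), together with a complement of everything in X_0, split off a direct summand of \<rho>;
   these complements meet P_1 + P_2 + P_3 trivially because a relation
   p_1 + p_2 + p_3 = c_1 + c_2 + c_3 makes (c_k - p_k)_k a triple in X_0^1.  As the coordinates of
   such a triple sum to zero, already P_i + P_j = X_0.

   Moreover \<Phi>\<^sup>+\<rho> is again indecomposable: a decomposition X_0^1 = X' \<oplus> X'' compatible with \<Phi>\<^sup>+\<rho>
   projects to the decomposition X_0 = (\<Sigma>_k \<phi>_k X') \<oplus> (\<Sigma>_k \<phi>_k X'') of \<rho>, the two sums meeting
   trivially by compatibility with the H'_k.  Hence the perfect element z takes the value 0 or X_0^1
   on \<Phi>\<^sup>+\<rho>, and accordingly \<rho>(u) = \<phi>_i(\<Phi>\<^sup>+\<rho>(z)) + \<phi>_j(\<Phi>\<^sup>+\<rho>(z)) is 0 or X_0. *)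

section \<open>Sums of subspaces and compatible decompositions\<close>

lemma ssum_iff: "x \<in> ssum A B \<longleftrightarrow> (\<exists>a\<in>A. \<exists>b\<in>B. x = a + b)"
  unfolding ssum_def by blast

lemma ssumI [intro]: "a \<in> A \<Longrightarrow> b \<in> B \<Longrightarrow> a + b \<in> ssum A B"
  unfolding ssum_def by blast

lemma ssumE [elim]:
  assumes "x \<in> ssum A B"
  obtains a b where "a \<in> A" "b \<in> B" "x = a + b"
  using assms unfolding ssum_def by blast

lemma ssum_mono: "A \<subseteq> A' \<Longrightarrow> B \<subseteq> B' \<Longrightarrow> ssum A B \<subseteq> ssum A' B'"
  by blast

lemma ssum_commute: "ssum A B = ssum B A"
  by (auto simp: ssum_iff) (metis add.commute)+

lemma ssum_assoc: "ssum (ssum A B) C = ssum A (ssum B C)"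
proof (intro equalityI subsetI)
  fix x assume "x \<in> ssum (ssum A B) C"
  then obtain a b c where "a \<in> A" "b \<in> B" "c \<in> C" "x = (a + b) + c"
    by blast
  then show "x \<in> ssum A (ssum B C)"
    by (simp add: add.assoc ssumI)
next
  fix x assume "x \<in> ssum A (ssum B C)"
  then obtain a b c where "a \<in> A" "b \<in> B" "c \<in> C" "x = a + (b + c)"
    by blast
  then show "x \<in> ssum (ssum A B) C"
    by (simp flip: add.assoc add: ssumI)
qed

lemma ssum_left_commute: "ssum A (ssum B C) = ssum B (ssum A C)"
  by (metis ssum_assoc ssum_commute)

lemma ssum_interchange: "ssum (ssum A B) (ssum C D) = ssum (ssum A C) (ssum B D)"
  by (simp add: ssum_assoc ssum_left_commute[of B])

lemma ssum_0_right [simp]: "ssum A {0} = A"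
  by (auto simp: ssum_iff)

lemma ssum_upper1: "0 \<in> B \<Longrightarrow> A \<subseteq> ssum A B"
  by (metis add.right_neutral ssumI subsetI)

lemma ssum_upper2: "0 \<in> A \<Longrightarrow> B \<subseteq> ssum A B"
  by (metis ssum_commute ssum_upper1)

lemma ssum_image:
  assumes "\<And>a b. f (a + b) = f a + f b"
  shows "f ` ssum A B = ssum (f ` A) (f ` B)"
proof
  show "f ` ssum A B \<subseteq> ssum (f ` A) (f ` B)"
    using assms by (auto simp: ssum_iff) blast
  show "ssum (f ` A) (f ` B) \<subseteq> f ` ssum A B"
  proof
    fix x assume "x \<in> ssum (f ` A) (f ` B)"
    then obtain a b where "a \<in> A" "b \<in> B" "x = f a + f b"
      by blast
    then show "x \<in> f ` ssum A B"
      by (metis assms image_eqI ssumI)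
  qed
qed

definition splits :: "'v::ab_group_add set \<Rightarrow> 'v set \<Rightarrow> 'v set \<Rightarrow> bool" where
  "splits A B S \<longleftrightarrow> S \<subseteq> ssum (S \<inter> A) (S \<inter> B)"

lemma splits_image:
  assumes "inj f" "\<And>a b. f (a + b) = f a + f b" "splits A B S"
  shows "splits (f ` A) (f ` B) (f ` S)"
proof -
  have "f ` S \<subseteq> f ` ssum (S \<inter> A) (S \<inter> B)"
    using assms(3) unfolding splits_def by (rule image_mono)
  then show ?thesis
    by (simp only: splits_def ssum_image[of f, OF assms(2)] image_Int[OF assms(1)])
qed

definition ssum3 :: "(idx \<Rightarrow> 'v::ab_group_add set) \<Rightarrow> 'v set" where
  "ssum3 F = ssum (F I1) (ssum (F I2) (F I3))"

lemma ssum3_iff: "x \<in> ssum3 F \<longleftrightarrow> (\<exists>c. (\<forall>k. c k \<in> F k) \<and> x = c I1 + c I2 + c I3)"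
proof
  assume "x \<in> ssum3 F"
  then obtain c1 c2 c3 where "c1 \<in> F I1" "c2 \<in> F I2" "c3 \<in> F I3" "x = c1 + (c2 + c3)"
    unfolding ssum3_def by blast
  then show "\<exists>c. (\<forall>k. c k \<in> F k) \<and> x = c I1 + c I2 + c I3"
    by (intro exI[of _ "case_idx c1 c2 c3"]) (auto split: idx.split simp: add.assoc)
next
  assume "\<exists>c. (\<forall>k. c k \<in> F k) \<and> x = c I1 + c I2 + c I3"
  then show "x \<in> ssum3 F"
    unfolding ssum3_def by (auto simp: add.assoc)
qed

lemma ssum3_upper:
  assumes "\<And>k. 0 \<in> F k"
  shows "F k \<subseteq> ssum3 F"
proof -
  have "0 \<in> ssum (F I2) (F I3)"
    using ssumI[OF assms assms] by simp
  then have "F I1 \<subseteq> ssum3 F" "ssum (F I2) (F I3) \<subseteq> ssum3 F"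
    unfolding ssum3_def using assms by (simp_all add: ssum_upper1 ssum_upper2)
  moreover have "F I2 \<subseteq> ssum (F I2) (F I3)" "F I3 \<subseteq> ssum (F I2) (F I3)"
    using assms by (simp_all add: ssum_upper1 ssum_upper2)
  ultimately show ?thesis
    by (cases k) auto
qed

lemma ssum3_interchange: "ssum3 (\<lambda>k. ssum (F k) (G k)) = ssum (ssum3 F) (ssum3 G)"
  unfolding ssum3_def by (simp add: ssum_interchange)

context vector_space
begin

lemma subspace_ssum: "subspace A \<Longrightarrow> subspace B \<Longrightarrow> subspace (ssum A B)"
  unfolding ssum_def by (rule subspace_sums)

lemma ssum_least: "subspace S \<Longrightarrow> A \<subseteq> S \<Longrightarrow> B \<subseteq> S \<Longrightarrow> ssum A B \<subseteq> S"
  unfolding ssum_iff by (blast intro: subspace_add)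

lemma subspace_ssum3: "(\<And>k. subspace (F k)) \<Longrightarrow> subspace (ssum3 F)"
  unfolding ssum3_def by (intro subspace_ssum)

lemma ssum3_least: "subspace S \<Longrightarrow> (\<And>k. F k \<subseteq> S) \<Longrightarrow> ssum3 F \<subseteq> S"
  unfolding ssum3_def by (intro ssum_least)

lemma splits_eq: "subspace S \<Longrightarrow> splits A B S \<Longrightarrow> ssum (S \<inter> A) (S \<inter> B) = S"
  unfolding splits_def by (auto intro: subspace_add)

lemma direct_sum_unique:
  assumes "subspace A" "subspace B" "A \<inter> B = {0}"
    and "a \<in> A" "a' \<in> A" "b \<in> B" "b' \<in> B" "a + b = a' + b'"
  shows "a = a'"
proof -
  have "a - a' = b' - b"
    using assms(8) by (simp add: algebra_simps)
  moreover have "a - a' \<in> A" "b' - b \<in> B"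
    using assms by (auto intro: subspace_diff)
  ultimately have "a - a' \<in> A \<inter> B"
    by simp
  then show ?thesis
    using assms(3) by simp
qed

lemma direct_sum_assoc:
  assumes "subspace A" "subspace B" "A \<inter> B = {0}" "ssum A B \<inter> D = {0}"
  shows "A \<inter> ssum B D = {0}"
proof -
  have "x = 0" if "x \<in> A" "b \<in> B" "d \<in> D" "x = b + d" for x b d
  proof -
    have "x + - b \<in> ssum A B"
      using that(1,2) assms(2) by (blast intro: subspace_neg)
    moreover have "d = x + - b"
      using that(4) by simp
    ultimately have "d = 0"
      using that(3) assms(4) by blast
    then show "x = 0"
      using that assms(3) by auto
  qed
  moreover have "0 \<in> D"
    using assms(4) by blast
  then have "0 \<in> A \<inter> ssum B D"
    using ssumI[OF subspace_0[OF assms(2)], of 0 D] subspace_0[OF assms(1)] by simp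
  ultimately show ?thesis
    by blast
qed

lemma splits_Int:
  assumes "subspace A" "subspace B" "A \<inter> B = {0}" "splits A B S" "splits A B T"
  shows "splits A B (S \<inter> T)"
  unfolding splits_def
proof
  fix x assume "x \<in> S \<inter> T"
  then obtain a b a' b' where "a \<in> S \<inter> A" "b \<in> S \<inter> B" "x = a + b"
    and "a' \<in> T \<inter> A" "b' \<in> T \<inter> B" "x = a' + b'"
    using assms(4,5) unfolding splits_def by blast
  moreover from this have "a = a'"
    using direct_sum_unique[OF assms(1-3)] by (metis Int_iff)
  moreover from calculation have "b = b'"
    by simp
  ultimately show "x \<in> ssum (S \<inter> T \<inter> A) (S \<inter> T \<inter> B)"
    by blast
qed

lemma splits_ssum:
  assumes "subspace A" "subspace B" "splits A B S" "splits A B T"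
  shows "splits A B (ssum S T)"
  unfolding splits_def
proof
  fix x assume "x \<in> ssum S T"
  then obtain s t where st: "s \<in> S" "t \<in> T" "x = s + t"
    by blast
  obtain a b where ab: "a \<in> S \<inter> A" "b \<in> S \<inter> B" "s = a + b"
    using st(1) assms(3) unfolding splits_def by blast
  obtain a' b' where ab': "a' \<in> T \<inter> A" "b' \<in> T \<inter> B" "t = a' + b'"
    using st(2) assms(4) unfolding splits_def by blast
  have "x = (a + a') + (b + b')"
    using st(3) ab(3) ab'(3) by (simp add: algebra_simps)
  moreover have "a + a' \<in> ssum S T \<inter> A" "b + b' \<in> ssum S T \<inter> B"
    using ab ab' assms(1,2) by (auto intro: subspace_add)
  ultimately show "x \<in> ssum (ssum S T \<inter> A) (ssum S T \<inter> B)"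
    by (simp add: ssumI)
qed

lemma evalL_subspace:
  assumes "subspace X0" "\<And>i. subspace (Xs i)" "\<And>i. subspace (Ys i)"
    and "\<And>i. Xs i \<subseteq> X0" "\<And>i. Ys i \<subseteq> X0"
  shows "subspace (evalL X0 Xs Ys a) \<and> evalL X0 Xs Ys a \<subseteq> X0"
  by (induction a) (auto simp: assms subspace_inter subspace_ssum ssum_least)

lemma evalL_splits:
  assumes "subspace A" "subspace B" "A \<inter> B = {0}" "splits A B X0"
    and "\<And>i. splits A B (Xs i)" "\<And>i. splits A B (Ys i)"
  shows "splits A B (evalL X0 Xs Ys a)"
  by (induction a) (simp_all add: assms splits_Int splits_ssum)

section \<open>Complements\<close>

lemma subspace_Union_chain:
  assumes "C \<noteq> {}" "\<And>S. S \<in> C \<Longrightarrow> subspace S" "\<And>S T. S \<in> C \<Longrightarrow> T \<in> C \<Longrightarrow> S \<subseteq> T \<or> T \<subseteq> S"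
  shows "subspace (\<Union>C)"
  unfolding subspace_def
proof (intro conjI ballI allI)
  show "0 \<in> \<Union>C"
    using assms(1,2) subspace_0 by blast
  fix x y assume "x \<in> \<Union>C" "y \<in> \<Union>C"
  then obtain S T where "S \<in> C" "T \<in> C" "x \<in> S" "y \<in> T"
    by blast
  with assms(2,3) show "x + y \<in> \<Union>C"
    by (metis UnionI subsetD subspace_add)
next
  fix c x assume "x \<in> \<Union>C"
  with assms(2) show "c *s x \<in> \<Union>C"
    by (blast intro: subspace_scale)
qed

lemma maximal_disjoint_subspace:
  fixes U V :: "'b set"
  assumes "subspace V"
  defines "F \<equiv> {C. subspace C \<and> C \<subseteq> V \<and> U \<inter> C \<subseteq> {0}}"
  shows "\<exists>M\<in>F. \<forall>C\<in>F. M \<subseteq> C \<longrightarrow> C = M"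
proof (rule subset_Zorn_nonempty)
  show "F \<noteq> {}"
    using assms unfolding F_def by (auto intro!: exI[of _ "{0}"] subspace_0)
  fix Ch assume "Ch \<noteq> {}" "subset.chain F Ch"
  then have Ch: "Ch \<subseteq> F" "\<And>S T. S \<in> Ch \<Longrightarrow> T \<in> Ch \<Longrightarrow> S \<subseteq> T \<or> T \<subseteq> S"
    unfolding subset.chain_def by blast+
  then have "subspace (\<Union>Ch)"
    using \<open>Ch \<noteq> {}\<close> unfolding F_def by (intro subspace_Union_chain) auto
  then show "\<Union>Ch \<in> F"
    using Ch(1) unfolding F_def by blast
qed

lemma Int_span_insert_subset_0:
  assumes "subspace U" "subspace M" "U \<inter> M \<subseteq> {0}" "v \<notin> ssum U M"
  shows "U \<inter> span (insert v M) \<subseteq> {0}"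
proof
  fix x assume "x \<in> U \<inter> span (insert v M)"
  moreover have "span M = M"
    using assms(2) by simp
  ultimately obtain k where x: "x \<in> U" and m: "x - k *s v \<in> M"
    unfolding span_insert by blast
  show "x \<in> {0}"
  proof (cases "k = 0")
    case True
    then have "x \<in> U \<inter> M"
      using x m by simp
    then show ?thesis
      using assms(3) by blast
  next
    case False
    have "v = inverse k *s x + - (inverse k *s (x - k *s v))"
      using False by (simp add: scale_right_diff_distrib)
    moreover have "inverse k *s x \<in> U" "- (inverse k *s (x - k *s v)) \<in> M"
      using x m assms(1,2) by (auto intro: subspace_scale subspace_neg)
    ultimately have "v \<in> ssum U M"
      by (metis ssumI)
    then show ?thesis
      using assms(4) by blast
  qed
qed

lemma complement_exists:
  assumes "subspace U" "subspace V" "U \<subseteq> V"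
  obtains C where "subspace C" "C \<subseteq> V" "U \<inter> C = {0}" "ssum U C = V"
proof -
  define F where "F = {C. subspace C \<and> C \<subseteq> V \<and> U \<inter> C \<subseteq> {0}}"
  obtain M where "M \<in> F" and maximal: "\<forall>C\<in>F. M \<subseteq> C \<longrightarrow> C = M"
    using maximal_disjoint_subspace[OF assms(2)] unfolding F_def by blast
  then have M: "subspace M" "M \<subseteq> V" "U \<inter> M \<subseteq> {0}"
    unfolding F_def by simp_all
  have "V \<subseteq> ssum U M"
  proof
    fix v assume "v \<in> V"
    show "v \<in> ssum U M"
    proof (rule ccontr)
      assume v: "v \<notin> ssum U M"
      have "U \<inter> span (insert v M) \<subseteq> {0}"
        using assms(1) M(1,3) v by (rule Int_span_insert_subset_0)
      moreover have "span (insert v M) \<subseteq> V"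
        using \<open>v \<in> V\<close> M(2) assms(2) by (intro span_minimal) auto
      ultimately have "span (insert v M) \<in> F"
        unfolding F_def by simp
      moreover have "M \<subseteq> span (insert v M)"
        using span_superset by blast
      ultimately have "span (insert v M) = M"
        using maximal by blast
      then have "v \<in> M"
        using span_superset by blast
      then show False
        using v ssum_upper2[OF subspace_0[OF assms(1)]] by blast
    qed
  qed
  moreover have "ssum U M \<subseteq> V"
    using assms(2,3) M(2) by (rule ssum_least)
  moreover have "U \<inter> M = {0}"
    using M(1,3) assms(1) by (auto intro: subspace_0)
  ultimately show ?thesis
    using that M(1,2) by blast
qed

lemma complement_splitting:
  assumes "subspace U" "subspace V" "subspace X" "U \<subseteq> V" "X \<subseteq> V"
  obtains C where "subspace C" "C \<subseteq> V" "U \<inter> C = {0}" "ssum U C = V" "splits U C X"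
proof -
  obtain F where F: "subspace F" "F \<subseteq> X" "(X \<inter> U) \<inter> F = {0}" "ssum (X \<inter> U) F = X"
    using complement_exists[of "X \<inter> U" X] assms(1,3) by (auto intro: subspace_inter)
  have UF: "subspace (ssum U F)" "ssum U F \<subseteq> V"
    using subspace_ssum[OF assms(1) F(1)] ssum_least[OF assms(2,4)] F(2) assms(5) by auto
  obtain G where G: "subspace G" "G \<subseteq> V" "ssum U F \<inter> G = {0}" "ssum (ssum U F) G = V"
    using complement_exists[OF UF(1) assms(2) UF(2)] by blast
  show ?thesis
  proof (rule that)
    show "subspace (ssum F G)"
      using F(1) G(1) by (rule subspace_ssum)
    show "ssum F G \<subseteq> V"
      using ssum_least[OF assms(2) _ G(2)] F(2) assms(5) by blast
    have "U \<inter> F = {0}"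
      using F(2,3) assms(1) F(1) by (auto intro: subspace_0)
    then show "U \<inter> ssum F G = {0}"
      using direct_sum_assoc[OF assms(1) F(1)] G(3) by blast
    show "ssum U (ssum F G) = V"
      using G(4) by (simp add: ssum_assoc)
    have "F \<subseteq> ssum F G"
      using G(1) by (intro ssum_upper1 subspace_0)
    then show "splits U (ssum F G) X"
      unfolding splits_def using F(2,4) by (metis Int_greatest inf.cobounded1 inf_commute ssum_mono)
  qed
qed

end

definition scaleK :: "'k::field \<Rightarrow> (nat \<Rightarrow> 'k) \<Rightarrow> nat \<Rightarrow> 'k" where
  "scaleK c v = (\<lambda>n. c * v n)"

definition scaleT :: "'k::field \<Rightarrow> ('i \<Rightarrow> nat \<Rightarrow> 'k) \<Rightarrow> 'i \<Rightarrow> nat \<Rightarrow> 'k" where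
  "scaleT c \<eta> = (\<lambda>i. scaleK c (\<eta> i))"

interpretation seq: vector_space "scaleK :: 'k::field \<Rightarrow> _"
  by unfold_locales (simp_all add: scaleK_def fun_eq_iff algebra_simps)

interpretation triple: vector_space "scaleT :: 'k::field \<Rightarrow> ('i \<Rightarrow> nat \<Rightarrow> 'k) \<Rightarrow> _"
  by unfold_locales (simp_all add: scaleT_def scaleK_def fun_eq_iff algebra_simps)

lemma subspaceK_eq_subspace: "subspaceK = seq.subspace"
  by (simp add: fun_eq_iff subspaceK_def seq.subspace_def scaleK_def)

lemma is_repD:
  assumes "is_rep X0 Xs Ys"
  shows "seq.subspace X0" "seq.subspace (Xs k)" "seq.subspace (Ys k)" "Xs k \<subseteq> Ys k" "Ys k \<subseteq> X0"
  using assms by (auto simp: is_rep_def subspaceK_eq_subspace)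

lemma evalL_subspace_rep:
  assumes "is_rep X0 Xs Ys"
  shows "seq.subspace (evalL X0 Xs Ys a)"
  using seq.evalL_subspace is_repD[OF assms] by (meson order.trans)

lemma indecomposable_split_trivial:
  assumes "indecomposable X0 Xs Ys" "seq.subspace A" "seq.subspace B" "A \<inter> B = {0}" "ssum A B = X0"
    and "\<And>k. splits A B (Xs k)" "\<And>k. splits A B (Ys k)"
  shows "A = {0} \<or> B = {0}"
proof -
  have rep: "is_rep X0 Xs Ys"
    using assms(1) by (simp add: indecomposable_def)
  have "A \<subseteq> X0" "B \<subseteq> X0"
    using assms(5) ssum_upper1[OF seq.subspace_0[OF assms(3)]] ssum_upper2[OF seq.subspace_0[OF assms(2)]]
    by auto
  then have "splits A B X0"
    unfolding splits_def using assms(5) by (simp add: Int_absorb1)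
  then have "splits A B (evalL X0 Xs Ys a)" for a
    using seq.evalL_splits[OF assms(2-4)] assms(6,7) by blast
  then have "evalL X0 Xs Ys a = ssum (evalL X0 Xs Ys a \<inter> A) (evalL X0 Xs Ys a \<inter> B)" for a
    by (rule seq.splits_eq[OF evalL_subspace_rep[OF rep], symmetric])
  then show ?thesis
    using assms(1-5) unfolding indecomposable_def subspaceK_eq_subspace by blast
qed

section \<open>The space X_0^1 and its coordinate images\<close>

abbreviation phiRange :: "(idx \<Rightarrow> 'v::ab_group_add set) \<Rightarrow> idx \<Rightarrow> 'v set" where
  "phiRange Ys k \<equiv> phiMap k (PhiX0 Ys)"

lemma PhiX0_iff: "\<eta> \<in> PhiX0 Ys \<longleftrightarrow> (\<forall>k. \<eta> k \<in> Ys k) \<and> \<eta> I1 + \<eta> I2 + \<eta> I3 = 0"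
  by (simp add: PhiX0_def Rsp_def)

lemma Hp_Int_PhiX0: "Hp Ys k \<inter> PhiX0 Ys = {\<eta> \<in> PhiX0 Ys. \<eta> k = 0}"
  by (auto simp: Hp_def PhiX0_def)

lemma Gp_Int_PhiX0: "Gp Xs Ys k \<inter> PhiX0 Ys = {\<eta> \<in> PhiX0 Ys. \<eta> k \<in> Xs k}"
  by (auto simp: Gp_def PhiX0_def)

lemma phiMap_iff: "x \<in> phiMap k S \<longleftrightarrow> (\<exists>\<eta>\<in>S. x = \<eta> k)"
  by (auto simp: phiMap_def)

lemma phiMap_memI: "\<eta> \<in> S \<Longrightarrow> \<eta> k \<in> phiMap k S"
  unfolding phiMap_def by (rule imageI)

lemma phiMap_choice: "\<forall>k. c k \<in> phiMap k S \<Longrightarrow> \<exists>a. \<forall>k. a k \<in> S \<and> c k = a k k"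
  by (rule choice) (auto simp: phiMap_iff)

lemma phiMap_eq_0_imp:
  assumes "\<And>k. phiMap k S \<subseteq> {0}"
  shows "S \<subseteq> {0}"
proof
  fix \<eta> assume "\<eta> \<in> S"
  then have "\<eta> k = 0" for k
    using assms[of k] unfolding phiMap_def by blast
  then show "\<eta> \<in> {0}"
    by (simp add: fun_eq_iff)
qed

lemma phiRange_subset: "phiRange Ys k \<subseteq> Ys k"
  by (auto simp: phiMap_iff PhiX0_iff)

lemma module_hom_coordinate: "module_hom scaleT scaleK (\<lambda>\<eta>. \<eta> k)"
  by (simp add: module_hom_iff triple.module_axioms seq.module_axioms scaleT_def)

lemma phiMap_subspace: "triple.subspace S \<Longrightarrow> seq.subspace (phiMap k S)"
  unfolding phiMap_def by (rule module_hom.subspace_image[OF module_hom_coordinate])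

lemma PhiX0_subspace:
  assumes "\<And>k. seq.subspace (Ys k)"
  shows "triple.subspace (PhiX0 Ys)"
  unfolding triple.subspace_def
proof (intro conjI ballI allI)
  show "0 \<in> PhiX0 Ys"
    using assms by (simp add: PhiX0_iff seq.subspace_0)
  fix \<eta> \<mu> assume "\<eta> \<in> PhiX0 Ys" "\<mu> \<in> PhiX0 Ys"
  moreover have "(\<eta> + \<mu>) I1 + (\<eta> + \<mu>) I2 + (\<eta> + \<mu>) I3 = (\<eta> I1 + \<eta> I2 + \<eta> I3) + (\<mu> I1 + \<mu> I2 + \<mu> I3)"
    by (simp add: algebra_simps)
  ultimately show "\<eta> + \<mu> \<in> PhiX0 Ys"
    using assms by (simp add: PhiX0_iff seq.subspace_add)
next
  fix \<eta> c assume "\<eta> \<in> PhiX0 Ys"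
  moreover have "scaleK c (\<eta> I1) + scaleK c (\<eta> I2) + scaleK c (\<eta> I3) = scaleK c (\<eta> I1 + \<eta> I2 + \<eta> I3)"
    by (simp add: seq.scale_right_distrib)
  ultimately show "scaleT c \<eta> \<in> PhiX0 Ys"
    using assms by (simp add: PhiX0_iff seq.subspace_scale scaleT_def)
qed

lemma Hp_PhiX0_subspace:
  assumes "\<And>k. seq.subspace (Ys k)"
  shows "triple.subspace (Hp Ys k \<inter> PhiX0 Ys)"
proof -
  have "Hp Ys k \<inter> PhiX0 Ys = PhiX0 Ys \<inter> {\<eta>. \<eta> k = 0}"
    by (auto simp: Hp_Int_PhiX0)
  then show ?thesis
    using triple.subspace_inter[OF PhiX0_subspace[of Ys, OF assms]
        module_hom.subspace_kernel[OF module_hom_coordinate]]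
    by simp
qed

lemma Gp_PhiX0_subspace:
  assumes "\<And>k. seq.subspace (Ys k)" "seq.subspace (Xs k)"
  shows "triple.subspace (Gp Xs Ys k \<inter> PhiX0 Ys)"
proof -
  have "Gp Xs Ys k \<inter> PhiX0 Ys = PhiX0 Ys \<inter> (\<lambda>\<eta>. \<eta> k) -` Xs k"
    by (auto simp: Gp_Int_PhiX0)
  then show ?thesis
    using triple.subspace_inter[OF PhiX0_subspace[of Ys, OF assms(1)]
        module_hom.subspace_vimage[OF module_hom_coordinate assms(2)]]
    by simp
qed

lemma evalPhiPlus_subspace:
  assumes "is_rep X0 Xs Ys"
  shows "triple.subspace (evalPhiPlus Xs Ys a) \<and> evalPhiPlus Xs Ys a \<subseteq> PhiX0 Ys"
  unfolding evalPhiPlus_def using is_repD[OF assms]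
  by (intro triple.evalL_subspace PhiX0_subspace Hp_PhiX0_subspace Gp_PhiX0_subspace) auto

lemma phiRange_subspace: "(\<And>k. seq.subspace (Ys k)) \<Longrightarrow> seq.subspace (phiRange Ys k)"
  by (intro phiMap_subspace PhiX0_subspace)

lemma sum_idx_distinct:
  assumes "i \<noteq> j" "k \<noteq> i" "k \<noteq> j"
  shows "\<eta> I1 + \<eta> I2 + \<eta> I3 = \<eta> i + \<eta> j + (\<eta> k :: 'v::comm_monoid_add)"
  using assms by (cases i; cases j; cases k) (simp_all add: ac_simps)

lemma phiRange_subset_pair:
  assumes "\<And>k. seq.subspace (Ys k)" "i \<noteq> j"
  shows "phiRange Ys k \<subseteq> ssum (phiRange Ys i) (phiRange Ys j)"
proof
  fix x assume "x \<in> phiRange Ys k"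
  then obtain \<eta> where \<eta>: "\<eta> \<in> PhiX0 Ys" "x = \<eta> k"
    by (auto simp: phiMap_iff)
  have PhiX0: "- \<eta> \<in> PhiX0 Ys" "0 \<in> PhiX0 Ys"
    using PhiX0_subspace[of Ys, OF assms(1)] \<eta>(1) triple.subspace_neg triple.subspace_0 by blast+
  consider "k = i" | "k = j" | "k \<noteq> i" "k \<noteq> j"
    by blast
  then show "x \<in> ssum (phiRange Ys i) (phiRange Ys j)"
  proof cases
    case 1
    then show ?thesis
      using ssumI[OF phiMap_memI[OF \<eta>(1)] phiMap_memI[OF PhiX0(2)]] \<eta>(2) by simp
  next
    case 2
    then show ?thesis
      using ssumI[OF phiMap_memI[OF PhiX0(2)] phiMap_memI[OF \<eta>(1)]] \<eta>(2) by simp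
  next
    case 3
    have "\<eta> i + \<eta> j + \<eta> k = 0"
      using \<eta>(1) sum_idx_distinct[OF assms(2) 3, of \<eta>] by (simp add: PhiX0_iff)
    then have "x = - (\<eta> i + \<eta> j)"
      using \<eta>(2) by (metis add.commute eq_neg_iff_add_eq_0)
    then have "x = (- \<eta>) i + (- \<eta>) j"
      by simp
    then show ?thesis
      using ssumI[OF phiMap_memI[OF PhiX0(1)] phiMap_memI[OF PhiX0(1)]] by simp
  qed
qed

section \<open>Indecomposable representations are generated by the coordinate images\<close>

lemma phiRange_complements_disjoint:
  assumes "\<And>k. seq.subspace (Ys k)" "\<And>k. seq.subspace (C k)"
    and "\<And>k. C k \<subseteq> Ys k" "\<And>k. phiRange Ys k \<inter> C k = {0}"
  shows "ssum3 (phiRange Ys) \<inter> ssum3 C = {0}"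
proof -
  have "x = 0" if x: "x \<in> ssum3 (phiRange Ys)" "x \<in> ssum3 C" for x
  proof -
    obtain p where p: "\<forall>k. p k \<in> phiRange Ys k" "x = p I1 + p I2 + p I3"
      using x(1) unfolding ssum3_iff by blast
    obtain c where c: "\<forall>k. c k \<in> C k" "x = c I1 + c I2 + c I3"
      using x(2) unfolding ssum3_iff by blast
    have "c - p \<in> PhiX0 Ys"
      unfolding PhiX0_iff
    proof (intro conjI allI)
      fix k
      have "c k \<in> Ys k" "p k \<in> Ys k"
        using c(1) assms(3) p(1) phiRange_subset by blast+
      then show "(c - p) k \<in> Ys k"
        using seq.subspace_diff[OF assms(1)] by simp
    next
      show "(c - p) I1 + (c - p) I2 + (c - p) I3 = 0"
        using p(2) c(2) by (simp add: algebra_simps)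
    qed
    then have "(c - p) k \<in> phiRange Ys k" for k
      by (rule phiMap_memI)
    then have "(c - p) k + p k \<in> phiRange Ys k" for k
      using seq.subspace_add[OF phiRange_subspace[of Ys, OF assms(1)]] p(1) by blast
    then have "c k \<in> phiRange Ys k \<inter> C k" for k
      using c(1) by simp
    then have "c k = 0" for k
      using assms(4) by blast
    then show "x = 0"
      using c(2) by simp
  qed
  moreover have "0 \<in> ssum3 (phiRange Ys)" "0 \<in> ssum3 C"
    using assms(1,2) by (auto intro!: seq.subspace_0 seq.subspace_ssum3 phiRange_subspace)
  ultimately show ?thesis
    by blast
qed

lemma phiRange_complements:
  assumes rep: "is_rep X0 Xs Ys"
  shows "\<exists>C. \<forall>k. seq.subspace (C k) \<and> C k \<subseteq> Ys k \<and> phiRange Ys k \<inter> C k = {0}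
    \<and> ssum (phiRange Ys k) (C k) = Ys k \<and> splits (phiRange Ys k) (C k) (Xs k)"
proof (rule choice, rule allI)
  fix k
  note Ys = is_repD[OF rep]
  have "seq.subspace (phiRange Ys k)"
    by (rule phiRange_subspace[of Ys]) (rule Ys(3))
  then show "\<exists>C. seq.subspace C \<and> C \<subseteq> Ys k \<and> phiRange Ys k \<inter> C = {0}
    \<and> ssum (phiRange Ys k) C = Ys k \<and> splits (phiRange Ys k) C (Xs k)"
    by (rule seq.complement_splitting[OF _ Ys(3) Ys(2) phiRange_subset Ys(4)]) (intro exI conjI)
qed

lemma phiRange_decomposition:
  assumes rep: "is_rep X0 Xs Ys"
  obtains E where "seq.subspace E" "ssum3 (phiRange Ys) \<inter> E = {0}" "ssum (ssum3 (phiRange Ys)) E = X0"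
    "\<And>k. splits (ssum3 (phiRange Ys)) E (Xs k)" "\<And>k. splits (ssum3 (phiRange Ys)) E (Ys k)"
    "\<And>k. Ys k \<subseteq> ssum (phiRange Ys k) E"
proof -
  let ?P = "phiRange Ys" and ?W = "ssum3 (phiRange Ys)"
  note Ys = is_repD[OF rep]
  have P: "seq.subspace (?P k)" for k
    by (rule phiRange_subspace[of Ys]) (rule Ys(3))
  obtain C where "\<forall>k. seq.subspace (C k) \<and> C k \<subseteq> Ys k \<and> ?P k \<inter> C k = {0}
      \<and> ssum (?P k) (C k) = Ys k \<and> splits (?P k) (C k) (Xs k)"
    using phiRange_complements[OF rep] by (rule exE)
  then have C: "seq.subspace (C k)" "C k \<subseteq> Ys k" "?P k \<inter> C k = {0}" "ssum (?P k) (C k) = Ys k"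
    "splits (?P k) (C k) (Xs k)" for k
    by simp_all
  have W: "seq.subspace ?W" "?W \<subseteq> X0"
    by (rule seq.subspace_ssum3, rule P)
      (rule seq.ssum3_least[OF Ys(1)], rule order.trans[OF phiRange_subset Ys(5)])
  have Cs: "seq.subspace (ssum3 C)" "ssum3 C \<subseteq> X0"
    by (rule seq.subspace_ssum3, rule C(1))
      (rule seq.ssum3_least[OF Ys(1)], rule order.trans[OF C(2) Ys(5)])
  have WCs: "?W \<inter> ssum3 C = {0}"
    using phiRange_complements_disjoint[of Ys C] Ys(3) C(1-3) by blast
  obtain D where D: "seq.subspace D" "ssum ?W (ssum3 C) \<inter> D = {0}" "ssum (ssum ?W (ssum3 C)) D = X0"
    using seq.complement_exists[OF seq.subspace_ssum[OF W(1) Cs(1)] Ys(1) seq.ssum_least[OF Ys(1) W(2) Cs(2)]]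
    by blast
  let ?E = "ssum (ssum3 C) D"
  have PW: "?P k \<subseteq> ?W" for k
    by (rule ssum3_upper) (rule seq.subspace_0[OF P])
  have "C k \<subseteq> ssum3 C" for k
    by (rule ssum3_upper) (rule seq.subspace_0[OF C(1)])
  then have CE: "C k \<subseteq> ?E" for k
    using ssum_upper1[OF seq.subspace_0[OF D(1)], of "ssum3 C"] by blast
  show ?thesis
  proof (rule that)
    show "seq.subspace ?E"
      using Cs(1) D(1) by (rule seq.subspace_ssum)
    show "?W \<inter> ?E = {0}"
      using seq.direct_sum_assoc[OF W(1) Cs(1) WCs D(2)] .
    show "ssum ?W ?E = X0"
      using D(3) by (simp add: ssum_assoc)
    fix k
    have "Ys k = ssum (?P k) (C k)"
      using C(4) by simp
    also have "\<dots> \<subseteq> ssum (Ys k \<inter> ?W) (Ys k \<inter> ?E)"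
      using phiRange_subset[of k Ys] C(2) PW CE by (intro ssum_mono) blast+
    finally show "splits ?W ?E (Ys k)"
      unfolding splits_def .
    show "Ys k \<subseteq> ssum (?P k) ?E"
      using C(4)[of k] CE[of k] ssum_mono[of "?P k" "?P k" "C k" ?E] by simp
    have "Xs k \<subseteq> ssum (Xs k \<inter> ?P k) (Xs k \<inter> C k)"
      using C(5) unfolding splits_def .
    also have "\<dots> \<subseteq> ssum (Xs k \<inter> ?W) (Xs k \<inter> ?E)"
      using PW CE by (intro ssum_mono) blast+
    finally show "splits ?W ?E (Xs k)"
      unfolding splits_def .
  qed
qed

lemma indecomposable_phiRange:
  assumes ind: "indecomposable X0 Xs Ys" and ne: "PhiX0 Ys \<noteq> {0}"
  shows "Ys k = phiRange Ys k" "ssum3 (phiRange Ys) = X0"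
proof -
  have rep: "is_rep X0 Xs Ys"
    using ind by (simp add: indecomposable_def)
  note Ys = is_repD[OF rep]
  obtain E where E: "seq.subspace E" "ssum3 (phiRange Ys) \<inter> E = {0}" "ssum (ssum3 (phiRange Ys)) E = X0"
    "\<And>k. splits (ssum3 (phiRange Ys)) E (Xs k)" "\<And>k. splits (ssum3 (phiRange Ys)) E (Ys k)"
    "\<And>k. Ys k \<subseteq> ssum (phiRange Ys k) E"
    using phiRange_decomposition[OF rep] by blast
  have P: "seq.subspace (phiRange Ys k)" for k
    using phiRange_subspace[of Ys] Ys(3) by blast
  have "ssum3 (phiRange Ys) \<noteq> {0}"
  proof
    have "phiRange Ys k \<subseteq> ssum3 (phiRange Ys)" for k
      by (rule ssum3_upper) (rule seq.subspace_0[OF P])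
    moreover assume "ssum3 (phiRange Ys) = {0}"
    ultimately have "PhiX0 Ys \<subseteq> {0}"
      by (intro phiMap_eq_0_imp) simp
    then show False
      using ne PhiX0_subspace[of Ys, OF Ys(3)] triple.subspace_0 by blast
  qed
  then have "E = {0}"
    using indecomposable_split_trivial[OF ind seq.subspace_ssum3[OF P] E(1-5)] by blast
  then show "Ys k = phiRange Ys k" "ssum3 (phiRange Ys) = X0"
    using E(3) E(6)[of k] phiRange_subset by auto
qed

lemma indecomposable_phiRange_pair:
  assumes ind: "indecomposable X0 Xs Ys" and ne: "PhiX0 Ys \<noteq> {0}" and "i \<noteq> j"
  shows "ssum (phiRange Ys i) (phiRange Ys j) = X0"
proof -
  note Ys = is_repD[OF conjunct1[OF ind[unfolded indecomposable_def]]]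
  have S: "seq.subspace (ssum (phiRange Ys i) (phiRange Ys j))"
    using Ys(3) by (intro seq.subspace_ssum phiRange_subspace)
  have "X0 \<subseteq> ssum (phiRange Ys i) (phiRange Ys j)"
    using seq.ssum3_least[OF S, where F = "phiRange Ys"] phiRange_subset_pair[of Ys, OF Ys(3) assms(3)]
      indecomposable_phiRange(2)[OF ind ne]
    by simp
  moreover have "ssum (phiRange Ys i) (phiRange Ys j) \<subseteq> X0"
    using Ys phiRange_subset by (meson order.trans seq.ssum_least)
  ultimately show ?thesis
    by blast
qed

section \<open>Indecomposability of \<open>\<Phi>\<^sup>+\<rho>\<close>\<close>

locale PhiPlus_decomposition =
  fixes Xs Ys :: "idx \<Rightarrow> (nat \<Rightarrow> 'k::field) set" and X' X'' :: "(idx \<Rightarrow> nat \<Rightarrow> 'k) set"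
  assumes subspace_X': "triple.subspace X'" and subspace_X'': "triple.subspace X''"
    and disjoint: "X' \<inter> X'' = {0}" and sum: "ssum X' X'' = PhiX0 Ys"
    and splits_H: "\<And>k. splits X' X'' (Hp Ys k \<inter> PhiX0 Ys)"
    and splits_G: "\<And>k. splits X' X'' (Gp Xs Ys k \<inter> PhiX0 Ys)"
begin

abbreviation "A \<equiv> ssum3 (\<lambda>k. phiMap k X')"
abbreviation "B \<equiv> ssum3 (\<lambda>k. phiMap k X'')"

lemma subspace_PhiX0: "triple.subspace (PhiX0 Ys)"
  using triple.subspace_ssum[OF subspace_X' subspace_X''] sum by simp

lemma summands_subset: "X' \<subseteq> PhiX0 Ys" "X'' \<subseteq> PhiX0 Ys"
  using ssum_upper1[OF triple.subspace_0[OF subspace_X''], of X']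
    ssum_upper2[OF triple.subspace_0[OF subspace_X'], of X''] sum
  by simp_all

lemma coordinate_agree_imp_zero:
  assumes "a \<in> X'" "b \<in> X''" "a k = b k"
  shows "a k = 0"
proof -
  have "a - b \<in> Hp Ys k \<inter> PhiX0 Ys"
    using assms summands_subset subspace_PhiX0 by (auto simp: Hp_Int_PhiX0 intro: triple.subspace_diff)
  then obtain a' b' where a': "a' \<in> Hp Ys k \<inter> PhiX0 Ys \<inter> X'" and b': "b' \<in> X''"
    and "a - b = a' + b'"
    using splits_H[of k] unfolding splits_def by blast
  then have "a + - b = a' + b'"
    by simp
  then have "a = a'"
    using triple.direct_sum_unique[OF subspace_X' subspace_X'' disjoint] assms(1,2) a'(1) b'
      triple.subspace_neg[OF subspace_X''] by blast
  then show ?thesis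
    using a' by (simp add: Hp_Int_PhiX0)
qed

lemma subspace_A: "seq.subspace A" and subspace_B: "seq.subspace B"
  using subspace_X' subspace_X'' by (auto intro!: seq.subspace_ssum3 phiMap_subspace)

lemma A_disjoint_B: "A \<inter> B = {0}"
proof -
  have "w = 0" if w: "w \<in> A" "w \<in> B" for w
  proof -
    obtain c where c: "\<forall>k. c k \<in> phiMap k X'" "w = c I1 + c I2 + c I3"
      using w(1) unfolding ssum3_iff by blast
    obtain d where d: "\<forall>k. d k \<in> phiMap k X''" "w = d I1 + d I2 + d I3"
      using w(2) unfolding ssum3_iff by blast
    obtain a where "\<forall>k. a k \<in> X' \<and> c k = a k k"
      using phiMap_choice[OF c(1)] by (rule exE)
    moreover obtain b where "\<forall>k. b k \<in> X'' \<and> d k = b k k"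
      using phiMap_choice[OF d(1)] by (rule exE)
    ultimately have a: "a k \<in> X'" "c k = a k k" and b: "b k \<in> X''" "d k = b k k" for k
      by simp_all
    have "a k - b k \<in> PhiX0 Ys" for k
      using a(1) b(1) summands_subset subspace_PhiX0 by (blast intro: triple.subspace_diff)
    then have "(a k - b k) k \<in> Ys k" for k
      unfolding PhiX0_iff by blast
    then have "(\<lambda>k. c k - d k) \<in> PhiX0 Ys"
      using a(2) b(2) c(2) d(2) by (simp add: PhiX0_iff algebra_simps)
    \<comment> \<open>its \<open>X'\<close>-component \<open>\<alpha>\<close> has the coordinates \<open>c k\<close>, which therefore sum to zero\<close>
    then obtain \<alpha> \<beta> where \<alpha>: "\<alpha> \<in> X'" and \<beta>: "\<beta> \<in> X''" and "(\<lambda>k. c k - d k) = \<alpha> + \<beta>"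
      using sum by blast
    then have agree: "(\<alpha> - a k) k = (- \<beta> - b k) k" for k
      using a(2) b(2) by (simp add: fun_eq_iff algebra_simps)
    have "\<alpha> - a k \<in> X'" "- \<beta> - b k \<in> X''" for k
      using \<alpha> \<beta> a(1) b(1) subspace_X' subspace_X''
      by (auto intro: triple.subspace_diff triple.subspace_neg)
    then have "(\<alpha> - a k) k = 0" for k
      using agree by (rule coordinate_agree_imp_zero)
    then have "\<alpha> k = c k" for k
      using a(2) by simp
    moreover have "\<alpha> I1 + \<alpha> I2 + \<alpha> I3 = 0"
      using \<alpha> summands_subset by (auto simp: PhiX0_iff)
    ultimately show "w = 0"
      using c(2) by simp
  qed
  moreover have "0 \<in> A \<inter> B"
    using seq.subspace_0[OF subspace_A] seq.subspace_0[OF subspace_B] by blast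
  ultimately show ?thesis
    by blast
qed

lemma phiRange_eq: "phiRange Ys k = ssum (phiMap k X') (phiMap k X'')"
  unfolding phiMap_def by (simp flip: sum add: ssum_image)

lemma phiMap_subset_A: "phiMap k X' \<subseteq> A" and phiMap_subset_B: "phiMap k X'' \<subseteq> B"
  using subspace_X' subspace_X'' by (auto intro!: ssum3_upper seq.subspace_0 phiMap_subspace)

lemma splits_phiRange: "splits A B (phiRange Ys k)"
  unfolding splits_def
proof -
  have "phiMap k X' \<subseteq> phiRange Ys k \<inter> A" "phiMap k X'' \<subseteq> phiRange Ys k \<inter> B"
    using summands_subset phiMap_subset_A phiMap_subset_B unfolding phiMap_def by blast+
  then have "ssum (phiMap k X') (phiMap k X'') \<subseteq> ssum (phiRange Ys k \<inter> A) (phiRange Ys k \<inter> B)"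
    by (rule ssum_mono)
  then show "phiRange Ys k \<subseteq> ssum (phiRange Ys k \<inter> A) (phiRange Ys k \<inter> B)"
    by (simp only: phiRange_eq)
qed

lemma splits_Xs:
  assumes "Xs k \<subseteq> phiRange Ys k"
  shows "splits A B (Xs k)"
  unfolding splits_def
proof
  fix x assume x: "x \<in> Xs k"
  then have "x \<in> phiRange Ys k"
    using assms by blast
  then obtain \<eta> where "\<eta> \<in> PhiX0 Ys" "x = \<eta> k"
    by (auto simp: phiMap_iff)
  with x have "\<eta> \<in> Gp Xs Ys k \<inter> PhiX0 Ys"
    by (simp add: Gp_Int_PhiX0)
  then obtain a b where a: "a \<in> Gp Xs Ys k \<inter> PhiX0 Ys \<inter> X'" and b: "b \<in> Gp Xs Ys k \<inter> PhiX0 Ys \<inter> X''"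
    and "\<eta> = a + b"
    using splits_G[of k] unfolding splits_def by blast
  then have "x = a k + b k"
    using \<open>x = \<eta> k\<close> by simp
  moreover have "a k \<in> Xs k \<inter> A" "b k \<in> Xs k \<inter> B"
    using a b phiMap_subset_A phiMap_subset_B phiMap_memI[of a X' k] phiMap_memI[of b X'' k]
    by (auto simp: Gp_Int_PhiX0)
  ultimately show "x \<in> ssum (Xs k \<inter> A) (Xs k \<inter> B)"
    by blast
qed

lemma A_eq_0_imp: "A = {0} \<Longrightarrow> X' = {0}"
  using phiMap_eq_0_imp[of X'] phiMap_subset_A triple.subspace_0[OF subspace_X'] by blast

lemma B_eq_0_imp: "B = {0} \<Longrightarrow> X'' = {0}"
  using phiMap_eq_0_imp[of X''] phiMap_subset_B triple.subspace_0[OF subspace_X''] by blast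

lemma trivial_if_indecomposable:
  assumes ind: "indecomposable X0 Xs Ys" and ne: "PhiX0 Ys \<noteq> {0}"
  shows "X' = {0} \<or> X'' = {0}"
proof -
  have Ys: "Ys k = phiRange Ys k" for k
    using ind ne by (rule indecomposable_phiRange(1))
  have "ssum A B = X0"
    using indecomposable_phiRange(2)[OF ind ne] by (simp add: phiRange_eq ssum3_interchange)
  moreover have "splits A B (Ys k)" for k
    using splits_phiRange Ys by simp
  moreover have "splits A B (Xs k)" for k
    using ind is_repD(4)[of X0 Xs Ys k] Ys[of k] splits_Xs by (simp add: indecomposable_def)
  ultimately have "A = {0} \<or> B = {0}"
    using indecomposable_split_trivial[OF ind subspace_A subspace_B A_disjoint_B] by blast
  then show ?thesis
    using A_eq_0_imp B_eq_0_imp by blast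
qed

end

section \<open>Transport to sequence space\<close>

text \<open>Indecomposability is only defined for representations in spaces of sequences, so
  \<open>\<Phi>\<^sup>+\<rho>\<close>, whose space consists of triples of sequences, is transported along the linear
  bijection that interleaves the three coordinate sequences.\<close>

fun idx_code :: "idx \<Rightarrow> nat" where
  "idx_code I1 = 0" | "idx_code I2 = 1" | "idx_code I3 = 2"

definition idx_of_code :: "nat \<Rightarrow> idx" where
  "idx_of_code m = (if m = 0 then I1 else if m = 1 then I2 else I3)"

definition seq_of_triple :: "(idx \<Rightarrow> nat \<Rightarrow> 'a) \<Rightarrow> nat \<Rightarrow> 'a" where
  "seq_of_triple \<eta> n = \<eta> (idx_of_code (n mod 3)) (n div 3)"

definition triple_of_seq :: "(nat \<Rightarrow> 'a) \<Rightarrow> idx \<Rightarrow> nat \<Rightarrow> 'a" where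
  "triple_of_seq v k n = v (3 * n + idx_code k)"

lemma idx_code_less: "idx_code k < 3"
  by (cases k) simp_all

lemma idx_code_idx_of_code: "m < 3 \<Longrightarrow> idx_code (idx_of_code m) = m"
  by (auto simp: idx_of_code_def)

lemma idx_of_code_idx_code [simp]: "idx_of_code (idx_code k) = k"
  by (cases k) (simp_all add: idx_of_code_def)

lemma triple_of_seq_of_triple [simp]: "triple_of_seq (seq_of_triple \<eta>) = \<eta>"
  using idx_code_less by (simp add: fun_eq_iff triple_of_seq_def seq_of_triple_def)

lemma seq_of_triple_of_seq [simp]: "seq_of_triple (triple_of_seq v) = v"
  by (simp add: fun_eq_iff triple_of_seq_def seq_of_triple_def idx_code_idx_of_code)

lemma inj_seq_of_triple: "inj seq_of_triple"
  by (rule inj_on_inverseI[where g = triple_of_seq]) simp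

lemma inj_triple_of_seq: "inj triple_of_seq"
  by (rule inj_on_inverseI[where g = seq_of_triple]) simp

lemma seq_of_triple_add: "seq_of_triple (\<eta> + \<mu>) = seq_of_triple \<eta> + seq_of_triple \<mu>"
  by (simp add: fun_eq_iff seq_of_triple_def)

lemma triple_of_seq_add: "triple_of_seq (v + w) = triple_of_seq v + triple_of_seq w"
  by (simp add: fun_eq_iff triple_of_seq_def)

lemma seq_of_triple_0: "seq_of_triple 0 = 0" and triple_of_seq_0: "triple_of_seq 0 = 0"
  by (simp_all add: fun_eq_iff seq_of_triple_def triple_of_seq_def)

lemma image_eq_0_iff:
  assumes "inj f" "f 0 = 0"
  shows "f ` S = {0} \<longleftrightarrow> S = {0}"
  using assms by (metis image_empty image_insert inj_image_eq_iff)

lemma seq_of_triple_image_eq_0_iff: "seq_of_triple ` S = {0} \<longleftrightarrow> S = {0}"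
  by (rule image_eq_0_iff[OF inj_seq_of_triple]) (rule seq_of_triple_0)

lemma triple_of_seq_image_eq_0_iff: "triple_of_seq ` S = {0} \<longleftrightarrow> S = {0}"
  by (rule image_eq_0_iff[OF inj_triple_of_seq]) (rule triple_of_seq_0)

lemma module_hom_seq_of_triple: "module_hom scaleT scaleK seq_of_triple"
  by (simp add: module_hom_iff triple.module_axioms seq.module_axioms fun_eq_iff
      seq_of_triple_def scaleT_def scaleK_def)

lemma module_hom_triple_of_seq: "module_hom scaleK scaleT triple_of_seq"
  by (simp add: module_hom_iff triple.module_axioms seq.module_axioms fun_eq_iff
      triple_of_seq_def scaleT_def scaleK_def)

lemma evalL_image:
  assumes "inj f" "\<And>a b. f (a + b) = f a + f b"
  shows "evalL (f ` X0) (\<lambda>i. f ` Xs i) (\<lambda>i. f ` Ys i) a = f ` evalL X0 Xs Ys a"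
  by (induction a) (simp_all add: image_Int[OF assms(1)] ssum_image[of f, OF assms(2)])

abbreviation "PhiPlusX0 Ys \<equiv> seq_of_triple ` PhiX0 Ys"
abbreviation "PhiPlusXs Ys k \<equiv> seq_of_triple ` (Hp Ys k \<inter> PhiX0 Ys)"
abbreviation "PhiPlusYs Xs Ys k \<equiv> seq_of_triple ` (Gp Xs Ys k \<inter> PhiX0 Ys)"

lemma evalL_PhiPlus:
  "evalL (PhiPlusX0 Ys) (PhiPlusXs Ys) (PhiPlusYs Xs Ys) a = seq_of_triple ` evalPhiPlus Xs Ys a"
  unfolding evalPhiPlus_def by (rule evalL_image[OF inj_seq_of_triple]) (rule seq_of_triple_add)

lemma findimK_PhiPlus:
  assumes "is_rep X0 Xs Ys"
  shows "findimK (PhiPlusX0 Ys)"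
proof -
  obtain N where N: "\<forall>v\<in>X0. \<forall>n\<ge>N. v n = 0"
    using assms unfolding is_rep_def findimK_def by blast
  have "seq_of_triple \<eta> n = 0" if "\<eta> \<in> PhiX0 Ys" "3 * N \<le> n" for \<eta> n
  proof -
    have "\<eta> (idx_of_code (n mod 3)) \<in> X0"
      using that(1) is_repD(5)[OF assms] by (auto simp: PhiX0_iff)
    then show ?thesis
      using N that(2) by (simp add: seq_of_triple_def)
  qed
  then show ?thesis
    unfolding findimK_def by blast
qed

lemma is_rep_PhiPlus:
  assumes rep: "is_rep X0 Xs Ys"
  shows "is_rep (PhiPlusX0 Ys) (PhiPlusXs Ys) (PhiPlusYs Xs Ys)"
  unfolding is_rep_def subspaceK_eq_subspace
proof (intro conjI allI)
  note Ys = is_repD[OF rep]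
  note image = module_hom.subspace_image[OF module_hom_seq_of_triple]
  show "seq.subspace (PhiPlusX0 Ys)"
    by (rule image, rule PhiX0_subspace[of Ys, OF Ys(3)])
  show "findimK (PhiPlusX0 Ys)"
    using rep by (rule findimK_PhiPlus)
  fix k
  show "seq.subspace (PhiPlusXs Ys k)"
    by (rule image, rule Hp_PhiX0_subspace[of Ys, OF Ys(3)])
  show "seq.subspace (PhiPlusYs Xs Ys k)"
    by (rule image, rule Gp_PhiX0_subspace[of Ys, OF Ys(3) Ys(2)])
  have "Hp Ys k \<inter> PhiX0 Ys \<subseteq> Gp Xs Ys k \<inter> PhiX0 Ys"
    using seq.subspace_0[OF Ys(2)] by (auto simp: Hp_Int_PhiX0 Gp_Int_PhiX0)
  then show "PhiPlusXs Ys k \<subseteq> PhiPlusYs Xs Ys k"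
    by (rule image_mono)
  show "PhiPlusYs Xs Ys k \<subseteq> PhiPlusX0 Ys"
    by (rule image_mono) blast
qed

lemma PhiPlus_decomposition_pullback:
  fixes X' X'' :: "(nat \<Rightarrow> 'k::field) set"
  assumes "seq.subspace X'" "seq.subspace X''" "X' \<inter> X'' = {0}" "ssum X' X'' = PhiPlusX0 Ys"
    and splits: "\<And>a. splits X' X'' (evalL (PhiPlusX0 Ys) (PhiPlusXs Ys) (PhiPlusYs Xs Ys) a)"
  shows "PhiPlus_decomposition Xs Ys (triple_of_seq ` X') (triple_of_seq ` X'')"
proof
  have inj: "inj (triple_of_seq :: (nat \<Rightarrow> 'k) \<Rightarrow> _)"
    by (rule inj_triple_of_seq)
  have add: "\<And>v w :: nat \<Rightarrow> 'k. triple_of_seq (v + w) = triple_of_seq v + triple_of_seq w"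
    by (rule triple_of_seq_add)
  show "triple.subspace (triple_of_seq ` X')" "triple.subspace (triple_of_seq ` X'')"
    using assms(1,2) by (auto intro: module_hom.subspace_image[OF module_hom_triple_of_seq])
  show "triple_of_seq ` X' \<inter> triple_of_seq ` X'' = {0}"
    using assms(3) by (simp flip: image_Int[OF inj] add: triple_of_seq_0)
  show "ssum (triple_of_seq ` X') (triple_of_seq ` X'') = PhiX0 Ys"
    using assms(4) by (simp flip: ssum_image[of triple_of_seq, OF add] add: image_image)
  show "splits (triple_of_seq ` X') (triple_of_seq ` X'') (Hp Ys k \<inter> PhiX0 Ys)"
    "splits (triple_of_seq ` X') (triple_of_seq ` X'') (Gp Xs Ys k \<inter> PhiX0 Ys)" for k
    using splits_image[OF inj add splits[of "GX k"]] splits_image[OF inj add splits[of "GY k"]]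
    by (simp_all add: image_image)
qed

lemma indecomposable_PhiPlus:
  fixes X0 :: "(nat \<Rightarrow> 'k::field) set"
  assumes ind: "indecomposable X0 Xs Ys" and ne: "PhiX0 Ys \<noteq> {0}"
  shows "indecomposable (PhiPlusX0 Ys) (PhiPlusXs Ys) (PhiPlusYs Xs Ys)"
  unfolding indecomposable_def
proof (intro conjI notI)
  have "is_rep X0 Xs Ys"
    using ind by (simp add: indecomposable_def)
  then show "is_rep (PhiPlusX0 Ys) (PhiPlusXs Ys) (PhiPlusYs Xs Ys)"
    by (rule is_rep_PhiPlus)
  show "PhiPlusX0 Ys = {0} \<Longrightarrow> False"
    using ne by (simp add: seq_of_triple_image_eq_0_iff)
  let ?R = "evalL (PhiPlusX0 Ys) (PhiPlusXs Ys) (PhiPlusYs Xs Ys)"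
  assume "\<exists>X' X''. subspaceK X' \<and> subspaceK X'' \<and> X' \<noteq> {0} \<and> X'' \<noteq> {0} \<and>
    X' \<inter> X'' = {0} \<and> ssum X' X'' = PhiPlusX0 Ys \<and>
    (\<forall>a. ?R a = ssum (?R a \<inter> X') (?R a \<inter> X''))"
  then obtain X' X'' where X': "seq.subspace X'" "X' \<noteq> {0}" and X'': "seq.subspace X''" "X'' \<noteq> {0}"
    and disjoint: "X' \<inter> X'' = {0}" and sum: "ssum X' X'' = PhiPlusX0 Ys"
    and R: "\<forall>a. ?R a = ssum (?R a \<inter> X') (?R a \<inter> X'')"
    unfolding subspaceK_eq_subspace by blast
  have "splits X' X'' (?R a)" for a
    unfolding splits_def using R by blast
  then interpret PhiPlus_decomposition Xs Ys "triple_of_seq ` X'" "triple_of_seq ` X''"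
    by (rule PhiPlus_decomposition_pullback[OF X'(1) X''(1) disjoint sum])
  show False
    using trivial_if_indecomposable[OF ind ne] X'(2) X''(2) by (simp add: triple_of_seq_image_eq_0_iff)
qed

lemma perfect_evalPhiPlus:
  fixes X0 :: "(nat \<Rightarrow> 'k::field) set"
  assumes "perfect TYPE('k) z" and ind: "indecomposable X0 Xs Ys"
  shows "evalPhiPlus Xs Ys z = {0} \<or> evalPhiPlus Xs Ys z = PhiX0 Ys"
proof (cases "PhiX0 Ys = {0}")
  case True
  have "is_rep X0 Xs Ys"
    using ind by (simp add: indecomposable_def)
  then have "triple.subspace (evalPhiPlus Xs Ys z)" "evalPhiPlus Xs Ys z \<subseteq> PhiX0 Ys"
    using evalPhiPlus_subspace by blast+
  then show ?thesis
    using True triple.subspace_0 by blast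
next
  case False
  have "evalL (PhiPlusX0 Ys) (PhiPlusXs Ys) (PhiPlusYs Xs Ys) z = {0} \<or>
      evalL (PhiPlusX0 Ys) (PhiPlusXs Ys) (PhiPlusYs Xs Ys) z = PhiPlusX0 Ys"
    using assms(1) indecomposable_PhiPlus[OF ind False] unfolding perfect_def by blast
  then have "seq_of_triple ` evalPhiPlus Xs Ys z = {0} \<or> seq_of_triple ` evalPhiPlus Xs Ys z = PhiPlusX0 Ys"
    by (simp only: evalL_PhiPlus)
  then show ?thesis
    using inj_image_eq_iff[OF inj_seq_of_triple] by (auto simp: seq_of_triple_image_eq_0_iff)
qed

theorem mainTheorem14:
  fixes z u :: lterm and i j :: idx
  assumes "perfect TYPE('k::field) z"
    and "i \<noteq> j"
    and "\<forall>(X0::(nat \<Rightarrow> 'k) set) Xs Ys. indecomposable X0 Xs Ys \<longrightarrow>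
           ssum (phiMap i (evalPhiPlus Xs Ys z)) (phiMap j (evalPhiPlus Xs Ys z)) = evalL X0 Xs Ys u"
  shows "perfect TYPE('k) u"
  unfolding perfect_def
proof (intro allI impI)
  fix X0 :: "(nat \<Rightarrow> 'k) set" and Xs Ys
  assume ind: "indecomposable X0 Xs Ys"
  have u: "evalL X0 Xs Ys u = ssum (phiMap i (evalPhiPlus Xs Ys z)) (phiMap j (evalPhiPlus Xs Ys z))"
    using assms(3) ind by simp
  consider "evalPhiPlus Xs Ys z = {0}" | "evalPhiPlus Xs Ys z = PhiX0 Ys" "PhiX0 Ys \<noteq> {0}"
    using perfect_evalPhiPlus[OF assms(1) ind] by auto
  then show "evalL X0 Xs Ys u = {0} \<or> evalL X0 Xs Ys u = X0"
  proof cases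
    case 1
    then show ?thesis
      using u by (simp add: phiMap_def)
  next
    case 2
    then show ?thesis
      using u indecomposable_phiRange_pair[OF ind _ assms(2)] by simp
  qed
qed

end
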